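(* Let $f,g:[0,\infty)\to[0,\infty)$, let $0<a<b<\infty$, and suppose $fg$ is Lebesgue integrable on $[a,b]$. Let $q\ge1$ and $(\alpha_1,m_1),(\alpha_2,m_2)\in(0,1]^2$. Suppose $f^q$ is $(\alpha_1,m_1)$-GA-convex on $[0,\max\{a^{1/m_1},b\}]$ and $g^q$ is $(\alpha_2,m_2)$-GA-convex on $[0,\max\{a^{1/m_2},b\}]$. Then \begin{multline*} \int_a^b f(x)g(x)\,dx\le(\ln b-\ln a)[L(a,b)]^{1-1/q}\Bigl\{m_1m_2\bigl[L(a,b)-G(\alpha_1,1)-G(\alpha_2,1)+G(\alpha_1+\alpha_2,1)\bigr]f^q(a^{1/m_1})g^q(a^{1/m_2})\\ +m_1\bigl[G(\alpha_2,1)-G(\alpha_1+\alpha_2,1)\bigr]f^q(a^{1/m_1})g^q(b)+m_2\bigl[G(\alpha_1,1)-G(\alpha_1+\alpha_2,1)\bigr]f^q(b)g^q(a^{1/m_2})\\ +G(\alpha_1+\alpha_2,1)f^q(b)g^q(b)\Bigr\}^{1/q}. \end{multline*}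
   Context: For $c>0$, $h:[0,c]\to\mathbb{R}$ and $(\alpha,m)\in(0,1]^2$, $h$ is called $(\alpha,m)$-GA-convex on $[0,c]$ if $h\bigl(x^\lambda y^{m(1-\lambda)}\bigr)\le\lambda^\alpha h(x)+m(1-\lambda^\alpha)h(y)$ for all $x,y\in[0,c]$ and all $\lambda\in[0,1]$ (with the convention $0^0=1$). For fixed $0<a<b$ and $\ell\ge0$, $\alpha>0$, set $G(\alpha,\ell)=\int_0^1 t^\alpha a^{\ell(1-t)}b^{\ell t}\,dt$. For $x,y>0$, $x\neq y$, the logarithmic mean is $L(x,y)=\frac{y-x}{\ln y-\ln x}$. *)

theory Defs
  imports "HOL-Analysis.Analysis"
begin

text \<open>Real power with the convention 0^0 = 1 (for nonnegative bases).\<close>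
definition pw :: "real \<Rightarrow> real \<Rightarrow> real" where
  "pw x t = (if t = 0 then 1 else x powr t)"

definition GA_convex :: "real \<Rightarrow> real \<Rightarrow> real \<Rightarrow> (real \<Rightarrow> real) \<Rightarrow> bool" where
  "GA_convex \<alpha> m c h \<longleftrightarrow>
     (\<forall>x\<in>{0..c}. \<forall>y\<in>{0..c}. \<forall>t\<in>{0..1}.
        h (pw x t * pw y (m * (1 - t))) \<le> pw t \<alpha> * h x + m * (1 - pw t \<alpha>) * h y)"

definition G :: "real \<Rightarrow> real \<Rightarrow> real \<Rightarrow> real \<Rightarrow> real" where
  "G a b \<alpha> l = integral {0..1} (\<lambda>t. pw t \<alpha> * a powr (l * (1 - t)) * b powr (l * t))"

definition logmean :: "real \<Rightarrow> real \<Rightarrow> real" where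
  "logmean x y = (y - x) / (ln y - ln x)"

end

theory Submission
  imports Defs
begin

text \<open>On the geometric path \<open>x = a powr (1 - t) * b powr t\<close>, \<open>t \<in> [0, 1]\<close>, one has
  \<open>x = b powr t * (a powr (1/m)) powr (m (1 - t))\<close>, so GA-convexity bounds \<open>f(x) powr q\<close> by
  \<open>t powr \<alpha>\<^sub>1 * f(b) powr q + m\<^sub>1 (1 - t powr \<alpha>\<^sub>1) f(a powr (1/m\<^sub>1)) powr q\<close>, and \<open>g(x) powr q\<close>
  likewise. Since \<open>dx = (ln b - ln a) a powr (1 - t) b powr t dt\<close>, the product of the two bounds
  integrates over \<open>[a, b]\<close> to \<open>ln b - ln a\<close> times the expression in braces: the weight
  \<open>a powr (1 - t) b powr t\<close> integrates to \<open>L(a, b)\<close>, and multiplied by \<open>t powr \<beta>\<close> to \<open>G(\<beta>, 1)\<close>.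
  The power mean inequality \<open>\<integral> u \<le> (b - a) powr (1 - 1/q) (\<integral> u powr q) powr (1/q)\<close> together with
  \<open>b - a = (ln b - ln a) L(a, b)\<close> concludes.\<close>

lemma pw_pos: "0 < x \<Longrightarrow> pw x t = x powr t"
  by (simp add: pw_def)

lemma pw_add: "0 < \<alpha> \<Longrightarrow> 0 < \<beta> \<Longrightarrow> pw t \<alpha> * pw t \<beta> = pw t (\<alpha> + \<beta>)"
  unfolding pw_def by (simp add: powr_add)

lemma continuous_on_pw:
  assumes "0 < \<alpha>" shows "continuous_on {0..1} (\<lambda>t. pw t \<alpha>)"
proof -
  have "(\<lambda>t. pw t \<alpha>) = (\<lambda>t. t powr \<alpha>)" using assms by (simp add: pw_def fun_eq_iff)
  then show ?thesis
    by (simp only:) (intro continuous_on_powr' continuous_on_id continuous_on_const, use assms in auto)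
qed

lemma le_powr_div_add:
  fixes s q :: real
  assumes "0 \<le> s" "1 \<le> q"
  shows "s \<le> s powr q / q + (1 - 1 / q)"
proof (cases "q = 1")
  case False
  then have "q > 1" using assms by simp
  then have "s * 1 \<le> s powr q / q + 1 powr (q / (q - 1)) / (q / (q - 1))"
    using assms by (intro Youngs_inequality) (auto simp: field_simps)
  then show ?thesis using \<open>q > 1\<close> by (simp add: field_simps)
qed (use assms in auto)

lemma has_integral_le_power_mean:
  fixes u v :: "'n::euclidean_space \<Rightarrow> real"
  assumes u: "(u has_integral I) S" and v: "(v has_integral V) S"
    and one: "((\<lambda>x. 1) has_integral c) S" and c: "c > 0" and q: "q \<ge> 1"
    and bound: "\<And>x. x \<in> S \<Longrightarrow> 0 \<le> u x \<and> u x powr q \<le> v x"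
  shows "I \<le> c powr (1 - 1 / q) * V powr (1 / q)"
proof -
  \<comment> \<open>Young's inequality with a free scale \<open>K\<close>, integrated; optimising \<open>K\<close> gives the claim.\<close>
  have Young: "I \<le> K powr (1 - q) / q * V + K * (1 - 1 / q) * c" if K: "K > 0" for K
  proof (rule has_integral_le[OF u])
    show "((\<lambda>x. K powr (1 - q) / q * v x + K * (1 - 1 / q) * 1) has_integral
        K powr (1 - q) / q * V + K * (1 - 1 / q) * c) S"
      by (intro has_integral_add has_integral_mult_right v one)
    fix x assume x: "x \<in> S"
    have "u x / K \<le> (u x / K) powr q / q + (1 - 1 / q)"
      using bound[OF x] K q by (intro le_powr_div_add) auto
    also have "(u x / K) powr q = u x powr q / K powr q"
      using bound[OF x] K by (simp add: powr_divide)
    also have "\<dots> \<le> v x / K powr q"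
      using bound[OF x] by (simp add: divide_right_mono)
    finally have "u x \<le> K * (v x / K powr q / q + (1 - 1 / q))"
      using K q by (simp add: divide_le_eq divide_right_mono mult.commute)
    also have "\<dots> = K powr (1 - q) / q * v x + K * (1 - 1 / q) * 1"
      using K by (simp add: powr_diff field_simps)
    finally show "u x \<le> K powr (1 - q) / q * v x + K * (1 - 1 / q) * 1" .
  qed
  have "V \<ge> 0"
    by (rule has_integral_nonneg[OF v]) (meson bound order.trans powr_ge_zero)
  show ?thesis
  proof (cases "V = 0")
    case True
    have "I \<le> 0"
    proof (rule field_le_epsilon)
      fix e :: real assume "e > 0"
      have "I \<le> e / c * (1 - 1 / q) * c"
        using Young[of "e / c"] \<open>e > 0\<close> c True by simp
      also have "\<dots> \<le> 0 + e"
        using \<open>e > 0\<close> c q by simp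
      finally show "I \<le> 0 + e" .
    qed
    then show ?thesis using True by simp
  next
    case False
    then have "V > 0" using \<open>V \<ge> 0\<close> by simp
    define K where "K = (V / c) powr (1 / q)"
    have "K > 0" using \<open>V > 0\<close> c by (simp add: K_def)
    have "K powr q = V / c"
      using \<open>V > 0\<close> c q by (simp add: K_def powr_powr)
    have "I \<le> K powr (1 - q) / q * V + K * (1 - 1 / q) * c"
      using Young[OF \<open>K > 0\<close>] .
    also have "\<dots> = K * c"
      using \<open>K powr q = V / c\<close> \<open>K > 0\<close> \<open>V > 0\<close> c q by (simp add: powr_diff field_simps)
    also have "\<dots> = c powr (1 - 1 / q) * V powr (1 / q)"
      using \<open>V > 0\<close> c by (simp add: K_def powr_divide powr_diff)
    finally show ?thesis .
  qed
qed

lemma log_ratio_in_unit: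
  fixes a b x :: real
  assumes "0 < a" "x \<in> {a..b}"
  shows "(ln x - ln a) / (ln b - ln a) \<in> {0..1}"
proof -
  have "0 < x" "0 < b" using assms by auto
  then have "0 \<le> ln x - ln a" "ln x - ln a \<le> ln b - ln a" using assms by auto
  then show ?thesis by (auto simp: divide_le_eq_1)
qed

lemma pw_geometric_path:
  fixes a b m x :: real
  assumes "0 < a" "0 < b" "a \<noteq> b" "0 < m" "0 < x"
  defines "t \<equiv> (ln x - ln a) / (ln b - ln a)"
  shows "pw b t * pw (a powr (1 / m)) (m * (1 - t)) = x"
proof -
  have "ln b \<noteq> ln a" using assms by simp
  have "pw b t * pw (a powr (1 / m)) (m * (1 - t)) = exp (t * ln b + (1 - t) * ln a)"
    using assms by (simp add: pw_pos powr_powr powr_def exp_add)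
  also have "t * ln b + (1 - t) * ln a = ln a + t * (ln b - ln a)" by (simp add: algebra_simps)
  also have "t * (ln b - ln a) = ln x - ln a" using \<open>ln b \<noteq> ln a\<close> by (simp add: t_def)
  finally show ?thesis using assms by simp
qed

lemma GA_convex_le_geometric:
  assumes conv: "GA_convex \<alpha> m c h" and ab: "0 < a" "a < b" and m: "0 < m"
    and c: "a powr (1 / m) \<le> c" "b \<le> c" and x: "x \<in> {a..b}"
  defines "t \<equiv> (ln x - ln a) / (ln b - ln a)"
  shows "h x \<le> pw t \<alpha> * h b + m * (1 - pw t \<alpha>) * h (a powr (1 / m))"
proof -
  have "t \<in> {0..1}" using log_ratio_in_unit[OF ab(1) x] by (simp add: t_def)
  moreover have "b \<in> {0..c}" "a powr (1 / m) \<in> {0..c}" using ab c by auto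
  ultimately have "h (pw b t * pw (a powr (1 / m)) (m * (1 - t)))
      \<le> pw t \<alpha> * h b + m * (1 - pw t \<alpha>) * h (a powr (1 / m))"
    using conv by (simp add: GA_convex_def)
  moreover have "pw b t * pw (a powr (1 / m)) (m * (1 - t)) = x"
    unfolding t_def using ab m x by (intro pw_geometric_path) auto
  ultimately show ?thesis by simp
qed

lemma has_integral_geometric_substitution:
  fixes a b :: real and h :: "real \<Rightarrow> real"
  assumes ab: "0 < a" "a < b" and h: "continuous_on {0..1} h"
  shows "((\<lambda>x. h ((ln x - ln a) / (ln b - ln a))) has_integral
           (ln b - ln a) * integral {0..1} (\<lambda>t. a powr (1 - t) * b powr t * h t)) {a..b}"
proof -
  define A where "A = ln b - ln a"
  define \<tau> where "\<tau> x = (ln x - ln a) / A" for x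
  define \<gamma> where "\<gamma> t = exp (ln a + t * A)" for t
  have "A > 0" using ab by (simp add: A_def)
  have \<gamma>_powr: "\<gamma> t = a powr (1 - t) * b powr t" for t
    using ab by (simp add: \<gamma>_def A_def powr_def flip: exp_add) (simp add: algebra_simps)
  have \<gamma>_ends: "\<gamma> 0 = a" "\<gamma> 1 = b" using ab by (auto simp: \<gamma>_def A_def)
  have \<tau>_\<gamma>: "\<tau> (\<gamma> t) = t" for t using \<open>A > 0\<close> by (simp add: \<tau>_def \<gamma>_def)
  have "\<gamma> s \<le> \<gamma> t" if "s \<le> t" for s t
    using \<open>A > 0\<close> that by (simp add: \<gamma>_def mult_right_mono)
  then have \<gamma>_image: "\<gamma> ` {0..1} \<subseteq> {a..b}"
    using \<gamma>_ends by fastforce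
  have "\<tau> ` {a..b} \<subseteq> {0..1}"
    using log_ratio_in_unit[OF ab(1)] by (auto simp: \<tau>_def A_def)
  moreover have "continuous_on {a..b} \<tau>"
    unfolding \<tau>_def by (intro continuous_intros) (use ab \<open>A > 0\<close> in auto)
  ultimately have h\<tau>: "continuous_on {a..b} (\<lambda>x. h (\<tau> x))"
    by (intro continuous_on_compose2[OF h]) auto
  have "(\<gamma> has_field_derivative A * \<gamma> t) (at t within {0..1})" for t
    unfolding \<gamma>_def by (auto intro!: derivative_eq_intros)
  then have "((\<lambda>t. (A * \<gamma> t) *\<^sub>R h (\<tau> (\<gamma> t))) has_integral integral {a..b} (\<lambda>x. h (\<tau> x))) {0..1}"
    using has_integral_substitution[OF _ _ \<gamma>_image h\<tau>] ab by (simp add: \<gamma>_ends)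
  then have "((\<lambda>t. (1 / A) *\<^sub>R ((A * \<gamma> t) *\<^sub>R h (\<tau> (\<gamma> t)))) has_integral
      (1 / A) *\<^sub>R integral {a..b} (\<lambda>x. h (\<tau> x))) {0..1}"
    by (rule has_integral_cmul)
  then have "((\<lambda>t. a powr (1 - t) * b powr t * h t) has_integral integral {a..b} (\<lambda>x. h (\<tau> x)) / A) {0..1}"
    using \<open>A > 0\<close> unfolding \<tau>_\<gamma> by (simp add: \<gamma>_powr mult.assoc)
  then have "integral {a..b} (\<lambda>x. h (\<tau> x)) = A * integral {0..1} (\<lambda>t. a powr (1 - t) * b powr t * h t)"
    using \<open>A > 0\<close> by (simp add: integral_unique)
  with integrable_continuous_real[OF h\<tau>] show ?thesis
    by (simp add: \<tau>_def A_def has_integral_integral)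
qed

lemma has_integral_geometric_path:
  assumes "0 < a" "a < b"
  shows "((\<lambda>t. a powr (1 - t) * b powr t) has_integral logmean a b) {0..1}"
proof -
  have "((\<lambda>x. 1) has_integral (ln b - ln a) * integral {0..1} (\<lambda>t. a powr (1 - t) * b powr t)) {a..b}"
    using has_integral_geometric_substitution[OF assms continuous_on_const[of _ "1::real"]] by simp
  moreover have "((\<lambda>x. 1) has_integral b - a) {a..b}"
    using has_integral_const_real[of "1::real" a b] assms by simp
  ultimately have "(ln b - ln a) * integral {0..1} (\<lambda>t. a powr (1 - t) * b powr t) = b - a"
    by (rule has_integral_unique)
  then have "integral {0..1} (\<lambda>t. a powr (1 - t) * b powr t) = logmean a b"
    using assms by (simp add: logmean_def eq_divide_eq mult.commute)
  moreover have "(\<lambda>t. a powr (1 - t) * b powr t) integrable_on {0..1}"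
    using assms by (intro integrable_continuous_real continuous_intros) auto
  ultimately show ?thesis by (simp add: has_integral_integral)
qed

lemma has_integral_G:
  assumes "0 < a" "0 < b" "0 < \<alpha>"
  shows "((\<lambda>t. pw t \<alpha> * (a powr (1 - t) * b powr t)) has_integral G a b \<alpha> 1) {0..1}"
proof -
  have "(\<lambda>t. pw t \<alpha> * (a powr (1 - t) * b powr t)) integrable_on {0..1}"
    using assms by (intro integrable_continuous_real continuous_intros continuous_on_pw) auto
  then show ?thesis by (simp add: G_def mult.assoc has_integral_integral)
qed

lemma has_integral_GA_bound_product_unit:
  fixes u\<^sub>1 v\<^sub>1 u\<^sub>2 v\<^sub>2 :: real
  assumes ab: "0 < a" "a < b" and \<alpha>: "0 < \<alpha>\<^sub>1" "0 < \<alpha>\<^sub>2"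
  shows "((\<lambda>t. a powr (1 - t) * b powr t *
            ((pw t \<alpha>\<^sub>1 * v\<^sub>1 + m\<^sub>1 * (1 - pw t \<alpha>\<^sub>1) * u\<^sub>1) * (pw t \<alpha>\<^sub>2 * v\<^sub>2 + m\<^sub>2 * (1 - pw t \<alpha>\<^sub>2) * u\<^sub>2)))
     has_integral
       m\<^sub>1 * m\<^sub>2 * (logmean a b - G a b \<alpha>\<^sub>1 1 - G a b \<alpha>\<^sub>2 1 + G a b (\<alpha>\<^sub>1 + \<alpha>\<^sub>2) 1) * u\<^sub>1 * u\<^sub>2
     + m\<^sub>1 * (G a b \<alpha>\<^sub>2 1 - G a b (\<alpha>\<^sub>1 + \<alpha>\<^sub>2) 1) * u\<^sub>1 * v\<^sub>2
     + m\<^sub>2 * (G a b \<alpha>\<^sub>1 1 - G a b (\<alpha>\<^sub>1 + \<alpha>\<^sub>2) 1) * v\<^sub>1 * u\<^sub>2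
     + G a b (\<alpha>\<^sub>1 + \<alpha>\<^sub>2) 1 * v\<^sub>1 * v\<^sub>2) {0..1}"
    (is "(?f has_integral ?J) _")
proof -
  define \<phi> where "\<phi> t = a powr (1 - t) * b powr t" for t
  have G: "((\<lambda>t. pw t \<beta> * \<phi> t) has_integral G a b \<beta> 1) {0..1}" if "0 < \<beta>" for \<beta>
    using has_integral_G[of a b \<beta>] ab that by (simp add: \<phi>_def)
  have "((\<lambda>t. m\<^sub>1 * m\<^sub>2 * u\<^sub>1 * u\<^sub>2 * (\<phi> t - pw t \<alpha>\<^sub>1 * \<phi> t - pw t \<alpha>\<^sub>2 * \<phi> t + pw t (\<alpha>\<^sub>1 + \<alpha>\<^sub>2) * \<phi> t)
      + m\<^sub>1 * u\<^sub>1 * v\<^sub>2 * (pw t \<alpha>\<^sub>2 * \<phi> t - pw t (\<alpha>\<^sub>1 + \<alpha>\<^sub>2) * \<phi> t)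
      + m\<^sub>2 * v\<^sub>1 * u\<^sub>2 * (pw t \<alpha>\<^sub>1 * \<phi> t - pw t (\<alpha>\<^sub>1 + \<alpha>\<^sub>2) * \<phi> t)
      + v\<^sub>1 * v\<^sub>2 * (pw t (\<alpha>\<^sub>1 + \<alpha>\<^sub>2) * \<phi> t))
    has_integral
      m\<^sub>1 * m\<^sub>2 * u\<^sub>1 * u\<^sub>2 * (logmean a b - G a b \<alpha>\<^sub>1 1 - G a b \<alpha>\<^sub>2 1 + G a b (\<alpha>\<^sub>1 + \<alpha>\<^sub>2) 1)
      + m\<^sub>1 * u\<^sub>1 * v\<^sub>2 * (G a b \<alpha>\<^sub>2 1 - G a b (\<alpha>\<^sub>1 + \<alpha>\<^sub>2) 1)
      + m\<^sub>2 * v\<^sub>1 * u\<^sub>2 * (G a b \<alpha>\<^sub>1 1 - G a b (\<alpha>\<^sub>1 + \<alpha>\<^sub>2) 1)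
      + v\<^sub>1 * v\<^sub>2 * G a b (\<alpha>\<^sub>1 + \<alpha>\<^sub>2) 1) {0..1}"
    (is "(?g has_integral ?I) _")
    using has_integral_geometric_path[OF ab] \<alpha>
    by (intro has_integral_add has_integral_diff has_integral_mult_right G) (auto simp: \<phi>_def)
  moreover have "?f = ?g"
    by (simp add: fun_eq_iff \<phi>_def algebra_simps flip: pw_add[OF \<alpha>])
  moreover have "?J = ?I"
    by (simp add: algebra_simps)
  ultimately show ?thesis by (simp only:)
qed

lemma has_integral_GA_bound_product:
  fixes u\<^sub>1 v\<^sub>1 u\<^sub>2 v\<^sub>2 :: real
  assumes ab: "0 < a" "a < b" and \<alpha>: "0 < \<alpha>\<^sub>1" "0 < \<alpha>\<^sub>2"
  shows "((\<lambda>x. (pw ((ln x - ln a) / (ln b - ln a)) \<alpha>\<^sub>1 * v\<^sub>1 + m\<^sub>1 * (1 - pw ((ln x - ln a) / (ln b - ln a)) \<alpha>\<^sub>1) * u\<^sub>1)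
              * (pw ((ln x - ln a) / (ln b - ln a)) \<alpha>\<^sub>2 * v\<^sub>2 + m\<^sub>2 * (1 - pw ((ln x - ln a) / (ln b - ln a)) \<alpha>\<^sub>2) * u\<^sub>2))
     has_integral (ln b - ln a) *
      (m\<^sub>1 * m\<^sub>2 * (logmean a b - G a b \<alpha>\<^sub>1 1 - G a b \<alpha>\<^sub>2 1 + G a b (\<alpha>\<^sub>1 + \<alpha>\<^sub>2) 1) * u\<^sub>1 * u\<^sub>2
     + m\<^sub>1 * (G a b \<alpha>\<^sub>2 1 - G a b (\<alpha>\<^sub>1 + \<alpha>\<^sub>2) 1) * u\<^sub>1 * v\<^sub>2
     + m\<^sub>2 * (G a b \<alpha>\<^sub>1 1 - G a b (\<alpha>\<^sub>1 + \<alpha>\<^sub>2) 1) * v\<^sub>1 * u\<^sub>2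
     + G a b (\<alpha>\<^sub>1 + \<alpha>\<^sub>2) 1 * v\<^sub>1 * v\<^sub>2)) {a..b}"
proof -
  have "continuous_on {0..1}
      (\<lambda>t. (pw t \<alpha>\<^sub>1 * v\<^sub>1 + m\<^sub>1 * (1 - pw t \<alpha>\<^sub>1) * u\<^sub>1) * (pw t \<alpha>\<^sub>2 * v\<^sub>2 + m\<^sub>2 * (1 - pw t \<alpha>\<^sub>2) * u\<^sub>2))"
    by (intro continuous_intros continuous_on_pw \<alpha>)
  from has_integral_geometric_substitution[OF ab this] show ?thesis
    unfolding integral_unique[OF has_integral_GA_bound_product_unit[OF ab \<alpha>]] .
qed

lemma powr_conjugate_mult:
  fixes A L S p :: real
  assumes "0 < A"
  shows "(A * L) powr (1 - p) * (A * S) powr p = A * L powr (1 - p) * S powr p"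
proof -
  have "(A * L) powr (1 - p) * (A * S) powr p = A powr (1 - p) * A powr p * L powr (1 - p) * S powr p"
    by (simp add: powr_mult mult_ac)
  also have "A powr (1 - p) * A powr p = A"
    using assms by (simp flip: powr_add)
  finally show ?thesis .
qed

theorem theorem3p5:
  fixes f g :: "real \<Rightarrow> real" and a b q \<alpha>\<^sub>1 m\<^sub>1 \<alpha>\<^sub>2 m\<^sub>2 :: real
  assumes f_nn: "\<forall>x\<ge>0. f x \<ge> 0" and g_nn: "\<forall>x\<ge>0. g x \<ge> 0"
    and ab: "0 < a" "a < b"
    and int: "set_integrable lborel {a..b} (\<lambda>x. f x * g x)"
    and q: "q \<ge> 1"
    and p1: "0 < \<alpha>\<^sub>1" "\<alpha>\<^sub>1 \<le> 1" "0 < m\<^sub>1" "m\<^sub>1 \<le> 1"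
    and p2: "0 < \<alpha>\<^sub>2" "\<alpha>\<^sub>2 \<le> 1" "0 < m\<^sub>2" "m\<^sub>2 \<le> 1"
    and cf: "GA_convex \<alpha>\<^sub>1 m\<^sub>1 (max (a powr (1 / m\<^sub>1)) b) (\<lambda>x. f x powr q)"
    and cg: "GA_convex \<alpha>\<^sub>2 m\<^sub>2 (max (a powr (1 / m\<^sub>2)) b) (\<lambda>x. g x powr q)"
  shows "(LINT x:{a..b}|lborel. f x * g x) \<le>
     (ln b - ln a) * logmean a b powr (1 - 1 / q) *
     (m\<^sub>1 * m\<^sub>2 * (logmean a b - G a b \<alpha>\<^sub>1 1 - G a b \<alpha>\<^sub>2 1 + G a b (\<alpha>\<^sub>1 + \<alpha>\<^sub>2) 1)
          * f (a powr (1 / m\<^sub>1)) powr q * g (a powr (1 / m\<^sub>2)) powr q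
      + m\<^sub>1 * (G a b \<alpha>\<^sub>2 1 - G a b (\<alpha>\<^sub>1 + \<alpha>\<^sub>2) 1) * f (a powr (1 / m\<^sub>1)) powr q * g b powr q
      + m\<^sub>2 * (G a b \<alpha>\<^sub>1 1 - G a b (\<alpha>\<^sub>1 + \<alpha>\<^sub>2) 1) * f b powr q * g (a powr (1 / m\<^sub>2)) powr q
      + G a b (\<alpha>\<^sub>1 + \<alpha>\<^sub>2) 1 * f b powr q * g b powr q) powr (1 / q)"
proof -
  let ?\<tau> = "\<lambda>x. (ln x - ln a) / (ln b - ln a)"
  have bound: "0 \<le> f x * g x \<and> (f x * g x) powr q \<le>
      (pw (?\<tau> x) \<alpha>\<^sub>1 * f b powr q + m\<^sub>1 * (1 - pw (?\<tau> x) \<alpha>\<^sub>1) * f (a powr (1 / m\<^sub>1)) powr q)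
    * (pw (?\<tau> x) \<alpha>\<^sub>2 * g b powr q + m\<^sub>2 * (1 - pw (?\<tau> x) \<alpha>\<^sub>2) * g (a powr (1 / m\<^sub>2)) powr q)"
    if x: "x \<in> {a..b}" for x
  proof -
    note f_le = GA_convex_le_geometric[OF cf ab p1(3) _ _ x]
    note g_le = GA_convex_le_geometric[OF cg ab p2(3) _ _ x]
    have "0 \<le> f x" "0 \<le> g x" using x ab f_nn g_nn by auto
    then show ?thesis
      using order.trans[OF powr_ge_zero f_le] by (simp add: powr_mult mult_mono[OF f_le g_le])
  qed
  have fg_int: "((\<lambda>x. f x * g x) has_integral (LINT x:{a..b}|lborel. f x * g x)) {a..b}"
    using set_borel_integral_eq_integral[OF int] by (simp add: has_integral_integral)
  have one_int: "((\<lambda>x. 1) has_integral (ln b - ln a) * logmean a b) {a..b}"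
    using has_integral_const_real[of "1::real" a b] ab by (simp add: logmean_def)
  have "0 < ln b - ln a" "0 < logmean a b"
    using ab by (simp_all add: logmean_def divide_pos_pos)
  then show ?thesis
    unfolding powr_conjugate_mult[OF \<open>0 < ln b - ln a\<close>, symmetric]
    by (intro has_integral_le_power_mean[OF fg_int has_integral_GA_bound_product[OF ab p1(1) p2(1)]
          one_int _ q bound]) simp_all
qed

end
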